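(* Let $\mathbf K$ be a commutative field, $p,q\in\mathbb N$ and $A\in\mathrm{Rec}_{p\times q}(\mathbf K)$. Then the set of values $\{A[U,W]:(U,W)\in\mathcal M_{p\times q}\}$ is contained in a subring $\tilde{\mathbf K}\subset\mathbf K$ which is finitely generated as a ring.
   Context: $\mathcal M_{p\times q}$ is the set of pairs $(U,W)$ of words of common length with $U$ over $\{0,\dots,p-1\}$, $W$ over $\{0,\dots,q-1\}$. For $A:\mathcal M_{p\times q}\to\mathbf K$ (values $A[U,W]$), $(\rho(S,T)A)[U,W]=A[US,WT]$. $\mathrm{Rec}_{p\times q}(\mathbf K)$ is the set of $A$ whose linear span of $\{\rho(S,T)A\}$ is finite-dimensional. *)

theory Defs
  imports Main
begin

definition M :: "nat \<Rightarrow> nat \<Rightarrow> (nat list \<times> nat list) set" where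
  "M p q = {(U, W). length U = length W \<and> set U \<subseteq> {..<p} \<and> set W \<subseteq> {..<q}}"

text \<open>Shift operator rho(S,T); a function on M_{p x q} is represented as a
  function on all pairs of lists, restricted to M (set to 0 outside).\<close>
definition rho :: "nat \<Rightarrow> nat \<Rightarrow> nat list \<Rightarrow> nat list \<Rightarrow>
    (nat list \<Rightarrow> nat list \<Rightarrow> 'k::zero) \<Rightarrow> (nat list \<Rightarrow> nat list \<Rightarrow> 'k)" where
  "rho p q S T A = (\<lambda>U W. if (U, W) \<in> M p q then A (U @ S) (W @ T) else 0)"

text \<open>Rec_{p x q}(K): the linear span of {rho(S,T) A : (S,T) in M} is finite-dimensional,
  i.e. contained in the span of a finite family of functions on M.\<close>
definition Rec :: "nat \<Rightarrow> nat \<Rightarrow> (nat list \<Rightarrow> nat list \<Rightarrow> 'k::field) set" where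
  "Rec p q = {A. \<exists>F :: (nat list \<Rightarrow> nat list \<Rightarrow> 'k) set. finite F \<and>
     (\<forall>(S, T) \<in> M p q. \<exists>c. rho p q S T A = (\<lambda>U W. \<Sum>f\<in>F. c f * f U W))}"

inductive_set subring_gen :: "'k::comm_ring_1 set \<Rightarrow> 'k set" for G where
  gen: "x \<in> G \<Longrightarrow> x \<in> subring_gen G"
| zero: "0 \<in> subring_gen G"
| one: "1 \<in> subring_gen G"
| add: "x \<in> subring_gen G \<Longrightarrow> y \<in> subring_gen G \<Longrightarrow> x + y \<in> subring_gen G"
| neg: "x \<in> subring_gen G \<Longrightarrow> - x \<in> subring_gen G"
| mult: "x \<in> subring_gen G \<Longrightarrow> y \<in> subring_gen G \<Longrightarrow> x * y \<in> subring_gen G"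

end

theory Submission
  imports Defs "HOL.Vector_Spaces" "HOL-Library.Function_Algebras"
begin

text \<open>The shifts \<open>\<rho>(S,T)A\<close> span a finite-dimensional space, so finitely many of them, a
  set \<open>B\<close>, span all the others. Shifting an element of \<open>B\<close> by one letter pair gives another
  shift, hence a fixed linear combination of \<open>B\<close>; reading a word letter by letter, every
  value \<open>b[U,W]\<close> with \<open>b \<in> B\<close> is then a polynomial in the values \<open>b[\<epsilon>,\<epsilon>]\<close> and these finitely
  many coefficients, and so is \<open>A[U,W]\<close>.\<close>

definition scale2 :: "'k::field \<Rightarrow> (nat list \<Rightarrow> nat list \<Rightarrow> 'k) \<Rightarrow> nat list \<Rightarrow> nat list \<Rightarrow> 'k"
  where "scale2 c f = (\<lambda>U W. c * f U W)"

interpretation fun2: vector_space "scale2 :: 'k::field \<Rightarrow> _"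
  by unfold_locales (auto simp: scale2_def fun_eq_iff algebra_simps)

lemma sum_apply2: "(\<Sum>v\<in>B. f v) U W = (\<Sum>v\<in>B. f v U W)"
  by (induction B rule: infinite_finite_induct) auto

lemma fun2_span_coeffs:
  assumes "finite B" and "h \<in> fun2.span B"
  shows "\<exists>u. \<forall>U W. h U W = (\<Sum>v\<in>B. u v * v U W)"
proof -
  from assms obtain u where "h = (\<Sum>v\<in>B. scale2 (u v) v)"
    by (auto simp: fun2.span_finite)
  then show ?thesis
    by (auto simp: sum_apply2 scale2_def)
qed

lemma subring_gen_mono:
  assumes "G \<subseteq> H"
  shows "subring_gen G \<subseteq> subring_gen H"
proof
  fix x assume "x \<in> subring_gen G"
  then show "x \<in> subring_gen H"
    by induction (use assms in \<open>auto intro: subring_gen.intros\<close>)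
qed

lemma subring_gen_sum_mult:
  assumes "\<And>v. v \<in> B \<Longrightarrow> x v \<in> subring_gen G" and "\<And>v. v \<in> B \<Longrightarrow> y v \<in> subring_gen G"
  shows "(\<Sum>v\<in>B. x v * y v) \<in> subring_gen G"
  using assms
  by (induction B rule: infinite_finite_induct) (auto intro: subring_gen.intros)

definition shifts :: "nat \<Rightarrow> nat \<Rightarrow> (nat list \<Rightarrow> nat list \<Rightarrow> 'k::zero) \<Rightarrow> (nat list \<Rightarrow> nat list \<Rightarrow> 'k) set"
  where "shifts p q A = {rho p q S T A | S T. (S, T) \<in> M p q}"

lemma rho_Nil_apply: "(U, W) \<in> M p q \<Longrightarrow> rho p q [] [] A U W = A U W"
  by (simp add: rho_def)

lemma rho_Nil_in_shifts: "rho p q [] [] A \<in> shifts p q A"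
  by (force simp: shifts_def M_def)

lemma rho_rho:
  assumes "(S', T') \<in> M p q"
  shows "rho p q S' T' (rho p q S T A) = rho p q (S' @ S) (T' @ T) A"
  using assms by (auto simp: rho_def M_def fun_eq_iff)

lemma rho_letter_in_shifts:
  assumes "g \<in> shifts p q A" and "a < p" and "c < q"
  shows "rho p q [a] [c] g \<in> shifts p q A"
proof -
  from assms(1) obtain S T where ST: "(S, T) \<in> M p q" and g: "g = rho p q S T A"
    by (auto simp: shifts_def)
  have "([a], [c]) \<in> M p q" and "(a # S, c # T) \<in> M p q"
    using assms ST by (auto simp: M_def)
  then show ?thesis
    by (auto simp: g rho_rho shifts_def)
qed

lemma Rec_finite_spanning_shifts:
  assumes "A \<in> Rec p q"
  obtains B where "finite B" "B \<subseteq> shifts p q A" "shifts p q A \<subseteq> fun2.span B"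
proof -
  obtain F :: "(nat list \<Rightarrow> nat list \<Rightarrow> 'a) set" where "finite F" and
    F: "\<forall>(S, T) \<in> M p q. \<exists>c. rho p q S T A = (\<lambda>U W. \<Sum>f\<in>F. c f * f U W)"
    using assms unfolding Rec_def by blast
  have "shifts p q A \<subseteq> fun2.span F"
  proof
    fix g assume "g \<in> shifts p q A"
    then obtain S T c where "g = (\<lambda>U W. \<Sum>f\<in>F. c f * f U W)"
      using F by (auto simp: shifts_def)
    then have "g = (\<Sum>f\<in>F. scale2 (c f) f)"
      by (simp add: fun_eq_iff sum_apply2 scale2_def)
    then show "g \<in> fun2.span F"
      by (simp add: fun2.span_sum fun2.span_scale fun2.span_base)
  qed
  moreover obtain B where "B \<subseteq> shifts p q A" "fun2.independent B" "shifts p q A \<subseteq> fun2.span B"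
    by (rule fun2.maximal_independent_subset)
  ultimately show ?thesis
    using fun2.independent_span_bound[OF \<open>finite F\<close>] that by blast
qed

text \<open>\<open>B\<close> need not be finite here: an infinite sum is \<open>0\<close>.\<close>

lemma values_in_subring_gen_of_recursion:
  assumes recursion: "\<And>b a c U W. b \<in> B \<Longrightarrow> a < p \<Longrightarrow> c < q \<Longrightarrow> (U, W) \<in> M p q \<Longrightarrow>
      b (U @ [a]) (W @ [c]) = (\<Sum>v\<in>B. \<mu> b a c v * v U W)"
    and init: "\<And>b. b \<in> B \<Longrightarrow> b [] [] \<in> subring_gen G"
    and coeffs: "\<And>b a c v. b \<in> B \<Longrightarrow> a < p \<Longrightarrow> c < q \<Longrightarrow> v \<in> B \<Longrightarrow> \<mu> b a c v \<in> subring_gen G"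
    and "(U, W) \<in> M p q" and "b \<in> B"
  shows "b U W \<in> subring_gen G"
  using assms(4,5)
proof (induction U arbitrary: W b rule: rev_induct)
  case Nil
  then show ?case
    using init by (simp add: M_def)
next
  case (snoc a U)
  from snoc.prems(1) have "length W = Suc (length U)"
    by (simp add: M_def)
  then obtain W' c where W: "W = W' @ [c]"
    by (cases W rule: rev_exhaust) auto
  with snoc.prems have UW': "(U, W') \<in> M p q" and "a < p" "c < q"
    by (auto simp: M_def)
  have "b (U @ [a]) W = (\<Sum>v\<in>B. \<mu> b a c v * v U W')"
    using recursion[OF snoc.prems(2) \<open>a < p\<close> \<open>c < q\<close> UW'] by (simp add: W)
  also have "\<dots> \<in> subring_gen G"
  proof (rule subring_gen_sum_mult)
    fix v assume "v \<in> B"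
    then show "\<mu> b a c v \<in> subring_gen G" and "v U W' \<in> subring_gen G"
      using coeffs[OF snoc.prems(2) \<open>a < p\<close> \<open>c < q\<close>] snoc.IH[OF UW'] by auto
  qed
  finally show ?case .
qed

lemma shift_stable_values_in_subring_gen:
  fixes B :: "(nat list \<Rightarrow> nat list \<Rightarrow> 'k::field) set"
  assumes "finite B"
    and stable: "\<And>b a c. b \<in> B \<Longrightarrow> a < p \<Longrightarrow> c < q \<Longrightarrow> rho p q [a] [c] b \<in> fun2.span B"
  obtains G where "finite G" "\<And>b U W. b \<in> B \<Longrightarrow> (U, W) \<in> M p q \<Longrightarrow> b U W \<in> subring_gen G"
proof -
  define \<mu> where "\<mu> b a c = (SOME u. \<forall>U W. rho p q [a] [c] b U W = (\<Sum>v\<in>B. u v * v U W))"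
    for b a c
  have \<mu>: "\<forall>U W. rho p q [a] [c] b U W = (\<Sum>v\<in>B. \<mu> b a c v * v U W)"
    if "b \<in> B" "a < p" "c < q" for b a c
    unfolding \<mu>_def using fun2_span_coeffs[OF \<open>finite B\<close> stable[OF that]] by (rule someI_ex)
  define G where "G = (\<lambda>b. b [] []) ` B \<union> (\<lambda>(b, a, c, v). \<mu> b a c v) ` (B \<times> {..<p} \<times> {..<q} \<times> B)"
  have "b U W \<in> subring_gen G" if "b \<in> B" "(U, W) \<in> M p q" for b U W
  proof (rule values_in_subring_gen_of_recursion[where \<mu> = \<mu>])
    fix b a c U W assume "b \<in> B" "a < p" "c < q" and UW: "(U, W) \<in> M p q"
    then have "rho p q [a] [c] b U W = (\<Sum>v\<in>B. \<mu> b a c v * v U W)"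
      using \<mu> by blast
    with UW show "b (U @ [a]) (W @ [c]) = (\<Sum>v\<in>B. \<mu> b a c v * v U W)"
      by (simp add: rho_def)
  next
    fix b assume "b \<in> B"
    then show "b [] [] \<in> subring_gen G"
      by (auto simp: G_def intro: subring_gen.gen)
  next
    fix b a c v assume "b \<in> B" "a < p" "c < q" "v \<in> B"
    then show "\<mu> b a c v \<in> subring_gen G"
      unfolding G_def by (intro subring_gen.gen UnI2 image_eqI[where x = "(b, a, c, v)"]) auto
  qed (use that in auto)
  moreover have "finite G"
    using \<open>finite B\<close> by (simp add: G_def)
  ultimately show ?thesis
    using that by blast
qed

lemma shift_stable_span_values_in_subring_gen:
  fixes B :: "(nat list \<Rightarrow> nat list \<Rightarrow> 'k::field) set"
  assumes "finite B"
    and stable: "\<And>b a c. b \<in> B \<Longrightarrow> a < p \<Longrightarrow> c < q \<Longrightarrow> rho p q [a] [c] b \<in> fun2.span B"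
    and "h \<in> fun2.span B"
  shows "\<exists>G. finite G \<and> (\<forall>(U, W) \<in> M p q. h U W \<in> subring_gen G)"
proof -
  obtain G where "finite G" and G: "\<And>b U W. b \<in> B \<Longrightarrow> (U, W) \<in> M p q \<Longrightarrow> b U W \<in> subring_gen G"
    using shift_stable_values_in_subring_gen[OF \<open>finite B\<close> stable] by blast
  obtain u where u: "\<forall>U W. h U W = (\<Sum>v\<in>B. u v * v U W)"
    using fun2_span_coeffs[OF \<open>finite B\<close> \<open>h \<in> fun2.span B\<close>] by blast
  have "h U W \<in> subring_gen (G \<union> u ` B)" if "(U, W) \<in> M p q" for U W
    unfolding u[rule_format]
  proof (rule subring_gen_sum_mult)
    fix v assume "v \<in> B"
    then show "u v \<in> subring_gen (G \<union> u ` B)" and "v U W \<in> subring_gen (G \<union> u ` B)"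
      using G[OF _ that] subring_gen_mono[of G "G \<union> u ` B"] by (auto intro: subring_gen.gen)
  qed
  moreover have "finite (G \<union> u ` B)"
    using \<open>finite G\<close> \<open>finite B\<close> by simp
  ultimately show ?thesis
    by blast
qed

theorem mainTheorem8:
  fixes A :: "nat list \<Rightarrow> nat list \<Rightarrow> 'k::field" and p q :: nat
  assumes "A \<in> Rec p q"
  shows "\<exists>G :: 'k set. finite G \<and> (\<forall>(U, W) \<in> M p q. A U W \<in> subring_gen G)"
proof -
  obtain B where "finite B" and B_shifts: "B \<subseteq> shifts p q A" and spanning: "shifts p q A \<subseteq> fun2.span B"
    using Rec_finite_spanning_shifts[OF assms] .
  have stable: "rho p q [a] [c] b \<in> fun2.span B" if "b \<in> B" "a < p" "c < q" for b a c
    using B_shifts spanning rho_letter_in_shifts that by blast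
  have "rho p q [] [] A \<in> fun2.span B"
    using rho_Nil_in_shifts spanning by blast
  then obtain G where "finite G" and G: "\<forall>(U, W) \<in> M p q. rho p q [] [] A U W \<in> subring_gen G"
    using shift_stable_span_values_in_subring_gen[OF \<open>finite B\<close> stable] by blast
  have "\<forall>(U, W) \<in> M p q. A U W \<in> subring_gen G"
    using G by (auto simp: rho_Nil_apply)
  with \<open>finite G\<close> show ?thesis
    by blast
qed

end
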